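(* For every finite input set $F\subset(K[x_1])[\tilde{\bm{x}}]\setminus K$, every run of the pseudo-eliminant algorithm described in the context terminates after finitely many steps.
   Context: $K$ is a field; $K[x_1,\dots,x_n]$ is regarded as $(K[x_1])[\tilde{\bm{x}}]$, $\tilde{\bm{x}}=(x_2,\dots,x_n)$, with a fixed monomial ordering $\succ$ on monomials in $\tilde{\bm{x}}$. For nonzero $f=\sum c_\alpha\tilde{\bm{x}}^\alpha$ ($c_\alpha\in K[x_1]$), $\operatorname{supp}f$ is the set of $\tilde{\bm{x}}^\alpha$ with $c_\alpha\ne0$, $\operatorname{lm}(f)$ its $\succ$-largest element, $\operatorname{lc}(f)\in K[x_1]$ its coefficient, $\operatorname{lt}(f)=\operatorname{lc}(f)\operatorname{lm}(f)$. Gcds in $K[x_1]$ are monic, $\operatorname{lcm}(a,b)=ab/\gcd(a,b)$. For $f,g\notin K[x_1]$, $S(f,g):=\frac{m\tilde{\bm{x}}^\gamma}{\operatorname{lt}(f)}f-\frac{m\tilde{\bm{x}}^\gamma}{\operatorname{lt}(g)}g$ with $m=\operatorname{lcm}(\operatorname{lc}f,\operatorname{lc}g)$, $\tilde{\bm{x}}^\gamma=\operatorname{lcm}(\operatorname{lm}f,\operatorname{lm}g)$. Pseudo-division of $S$ by a finite set $G\subset(K[x_1])[\tilde{\bm{x}}]\setminus K[x_1]$: starting with $h=S$, while $\operatorname{supp}h\cap\langle\operatorname{lm}(G)\rangle\neq\emptyset$, let $c_\alpha\tilde{\bm{x}}^\alpha$ be the term of $h$ whose monomial is the $\succ$-largest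 in this intersection, choose $b\in G$ with $\operatorname{lm}(b)\mid\tilde{\bm{x}}^\alpha$, put $m=\operatorname{lcm}(c_\alpha,\operatorname{lc}(b))$, $\mu=m/c_\alpha$ and replace $h$ by $\mu h-\frac{m\tilde{\bm{x}}^\alpha}{\operatorname{lt}(b)}b$. The final $h$ is the remainder $r$; the product $\lambda$ of the $\mu$'s is the multiplier. Algorithm. Input: finite $F\subset(K[x_1])[\tilde{\bm{x}}]\setminus K$. Initialize $G:=F\setminus K[x_1]$, $\Lambda:=\emptyset$, $\mathfrak{S}:=\emptyset$, and $f_0:=\gcd(F\cap K[x_1])$ if $F\cap K[x_1]\neq\emptyset$, else $f_0:=0$. Procedure $\mathcal{Q}(f,g)$ for $f\neq g$ in $G$: (i) if $\operatorname{lm}(f),\operatorname{lm}(g)$ are coprime, put $d=\gcd(\operatorname{lc}f,\operatorname{lc}g)$, add $d$ to $\Lambda$ if $d\notin K$, and do not form $S(f,g)$; (ii) else, if some $h\in G\setminus\{f,g\}$ has $\operatorname{lm}(h)\mid\operatorname{lcm}(\operatorname{lm}f,\operatorname{lm}g)$ and the triple $\{f,g,h\}$ has not been used in this way before, put $\lambda=\operatorname{lc}(h)/\gcd(\operatorname{lcm}(\operatorname{lc}f,\operatorname{lc}g),\operatorname{lc}h)$, add $\lambda$ to $\Lambda$ if $\lambda\notin K$, and do not form $S(f,g)$; (iii) otherwise add $S(f,g)$ to $\mathfrak{S}$. Apply $\mathcal{Q}$ to all pairs of $G$. Then, while $\mathfrak{S}\neq\emptyset$: take $S\in\mathfrak{S}$,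 pseudo-divide it by the current $G$ obtaining $\lambda,r$; add $\lambda$ to $\Lambda$ if $\lambda\notin K$; if $r\notin K[x_1]$, add $r$ to $G$ and apply $\mathcal{Q}(f,r)$ for every $f\in G\setminus\{r\}$; if $r\in K[x_1]\setminus K$, set $f_0:=\gcd(r,f_0)$ (with $\gcd(r,0)=r$); if $r=0$ do nothing; then delete $S$ from $\mathfrak{S}$. At the end set $\chi_\varepsilon:=f_0$, $B_\varepsilon:=G$, and for every $f\in B_\varepsilon$, if $d:=\gcd(\operatorname{lc}(f),\chi_\varepsilon)\notin K$, add $d$ to $\Lambda$. Output $\chi_\varepsilon$ (pseudo-eliminant), $B_\varepsilon$ (pseudo-basis) and $\Lambda$ (multiplier set). All choices (order of processing, choice of $h$, of $b$) are arbitrary. *)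

theory Defs
  imports "HOL-Library.Poly_Mapping" "HOL-Computational_Algebra.Computational_Algebra"
begin

(* Monomials in the variables x_2,...,x_n: exponent vectors (variable index => exponent). *)
type_synonym mon = "nat \<Rightarrow>\<^sub>0 nat"
(* Elements of (K[x_1])[x_2,...,x_n]: finitely supported maps monomial => coefficient in K[x_1]. *)
type_synonym 'k mpoly = "mon \<Rightarrow>\<^sub>0 'k poly"

definition monomial_order :: "(mon \<Rightarrow> mon \<Rightarrow> bool) \<Rightarrow> bool" where
  "monomial_order ord \<longleftrightarrow>
     (\<forall>a. \<not> ord a a) \<and>
     (\<forall>a b c. ord a b \<longrightarrow> ord b c \<longrightarrow> ord a c) \<and>
     (\<forall>a b. a \<noteq> b \<longrightarrow> ord a b \<or> ord b a) \<and>
     (\<forall>a b c. ord a b \<longrightarrow> ord (a + c) (b + c)) \<and>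
     (\<forall>a. a \<noteq> 0 \<longrightarrow> ord 0 a)"

definition mdvd :: "mon \<Rightarrow> mon \<Rightarrow> bool" where
  "mdvd s t \<longleftrightarrow> (\<forall>i. Poly_Mapping.lookup s i \<le> Poly_Mapping.lookup t i)"

definition mlcm :: "mon \<Rightarrow> mon \<Rightarrow> mon" where
  "mlcm s t = s + (t - s)"   (* pointwise maximum of exponents *)

definition mcoprime :: "mon \<Rightarrow> mon \<Rightarrow> bool" where
  "mcoprime s t \<longleftrightarrow> Poly_Mapping.keys s \<inter> Poly_Mapping.keys t = {}"

definition lm :: "(mon \<Rightarrow> mon \<Rightarrow> bool) \<Rightarrow> 'k::zero mpoly \<Rightarrow> mon" where
  "lm ord p = (THE m. m \<in> Poly_Mapping.keys p \<and> (\<forall>m' \<in> Poly_Mapping.keys p. m' \<noteq> m \<longrightarrow> ord m' m))"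

definition lc :: "(mon \<Rightarrow> mon \<Rightarrow> bool) \<Rightarrow> 'k::zero mpoly \<Rightarrow> 'k poly" where
  "lc ord p = Poly_Mapping.lookup p (lm ord p)"

definition inK1 :: "'k::zero mpoly \<Rightarrow> bool" where
  "inK1 p \<longleftrightarrow> Poly_Mapping.keys p \<subseteq> {0}"

definition inK :: "'k::zero mpoly \<Rightarrow> bool" where
  "inK p \<longleftrightarrow> inK1 p \<and> degree (Poly_Mapping.lookup p 0) = 0"

definition plcm :: "'k::field_gcd poly \<Rightarrow> 'k poly \<Rightarrow> 'k poly" where
  "plcm a b = a * b div gcd a b"

definition spoly :: "(mon \<Rightarrow> mon \<Rightarrow> bool) \<Rightarrow> 'k::field_gcd mpoly \<Rightarrow> 'k mpoly \<Rightarrow> 'k mpoly" where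
  "spoly ord f g =
     (let m = plcm (lc ord f) (lc ord g); \<gamma> = mlcm (lm ord f) (lm ord g) in
      Poly_Mapping.single (\<gamma> - lm ord f) (m div lc ord f) * f
      - Poly_Mapping.single (\<gamma> - lm ord g) (m div lc ord g) * g)"

definition addnc :: "'k::zero poly \<Rightarrow> 'k poly set \<Rightarrow> 'k poly set" where
  "addnc x L = (if degree x = 0 then L else insert x L)"

(* control point of the algorithm:
   Pairs None      : applying Q to the pending pairs of the initial G
   Pairs (Some S)  : applying Q(f,r) to the pending pairs after S was divided; then S is deleted
   Loop            : head of the main while loop
   Div S h lam     : pseudo-dividing S, current h and current multiplier lam
   Done            : the algorithm has output its result *)
datatype ('p, 'c) phase = Pairs "'p option" | Loop | Div 'p 'p 'c | Done

record ('p, 'c) state =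
  stG :: "'p set"
  stLam :: "'c set"
  stS :: "'p set"
  stf0 :: "'c"
  stUsed :: "'p set set"   (* triples {f,g,h} already used in Q(ii) *)
  stPend :: "'p set set"   (* pairs {f,g} to which Q still has to be applied *)
  stPh :: "('p, 'c) phase"

definition init :: "'k::field_gcd mpoly set \<Rightarrow> ('k mpoly, 'k poly) state" where
  "init F = (let G0 = {p \<in> F. \<not> inK1 p} in
     \<lparr> stG = G0, stLam = {}, stS = {},
       stf0 = (if {p \<in> F. inK1 p} = {} then 0 else Gcd {Poly_Mapping.lookup p 0 | p. p \<in> F \<and> inK1 p}),
       stUsed = {}, stPend = {{f, g} | f g. f \<in> G0 \<and> g \<in> G0 \<and> f \<noteq> g},
       stPh = Pairs None \<rparr>)"

(* one elementary step of (any run of) the algorithm; all choices are nondeterministic *)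
inductive alg_step :: "(mon \<Rightarrow> mon \<Rightarrow> bool) \<Rightarrow> ('k::field_gcd mpoly, 'k poly) state \<Rightarrow> ('k mpoly, 'k poly) state \<Rightarrow> bool"
  for ord where
  q_coprime: "\<lbrakk> stPh s = Pairs oS; {f, g} \<in> stPend s; f \<noteq> g;
               mcoprime (lm ord f) (lm ord g) \<rbrakk> \<Longrightarrow>
     alg_step ord s (s\<lparr> stPend := stPend s - {{f, g}},
                         stLam := addnc (gcd (lc ord f) (lc ord g)) (stLam s) \<rparr>)"
| q_crit: "\<lbrakk> stPh s = Pairs oS; {f, g} \<in> stPend s; f \<noteq> g;
             \<not> mcoprime (lm ord f) (lm ord g);
             h \<in> stG s - {f, g}; mdvd (lm ord h) (mlcm (lm ord f) (lm ord g));
             {f, g, h} \<notin> stUsed s \<rbrakk> \<Longrightarrow>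
     alg_step ord s (s\<lparr> stPend := stPend s - {{f, g}},
                         stUsed := insert {f, g, h} (stUsed s),
                         stLam := addnc (lc ord h div gcd (plcm (lc ord f) (lc ord g)) (lc ord h))
                                        (stLam s) \<rparr>)"
| q_spoly: "\<lbrakk> stPh s = Pairs oS; {f, g} \<in> stPend s; f \<noteq> g;
              \<not> mcoprime (lm ord f) (lm ord g);
              \<not> (\<exists>h \<in> stG s - {f, g}. mdvd (lm ord h) (mlcm (lm ord f) (lm ord g))
                                       \<and> {f, g, h} \<notin> stUsed s) \<rbrakk> \<Longrightarrow>
     alg_step ord s (s\<lparr> stPend := stPend s - {{f, g}},
                         stS := insert (spoly ord f g) (stS s) \<rparr>)"
| pairs_init_done: "\<lbrakk> stPh s = Pairs None; stPend s = {} \<rbrakk> \<Longrightarrow>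
     alg_step ord s (s\<lparr> stPh := Loop \<rparr>)"
| pairs_post_done: "\<lbrakk> stPh s = Pairs (Some S); stPend s = {} \<rbrakk> \<Longrightarrow>
     alg_step ord s (s\<lparr> stS := stS s - {S}, stPh := Loop \<rparr>)"
| loop_pick: "\<lbrakk> stPh s = Loop; S \<in> stS s \<rbrakk> \<Longrightarrow>
     alg_step ord s (s\<lparr> stPh := Div S S 1 \<rparr>)"
| loop_final: "\<lbrakk> stPh s = Loop; stS s = {} \<rbrakk> \<Longrightarrow>
     alg_step ord s (s\<lparr> stLam := stLam s \<union>
                            {gcd (lc ord f) (stf0 s) | f. f \<in> stG s \<and> degree (gcd (lc ord f) (stf0 s)) \<noteq> 0},
                         stPh := Done \<rparr>)"
| div_red: "\<lbrakk> stPh s = Div S h lam; \<alpha> \<in> Poly_Mapping.keys h;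
             \<forall>\<beta> \<in> Poly_Mapping.keys h. (\<exists>b' \<in> stG s. mdvd (lm ord b') \<beta>) \<longrightarrow> \<beta> = \<alpha> \<or> ord \<beta> \<alpha>;
             b \<in> stG s; mdvd (lm ord b) \<alpha>;
             c = Poly_Mapping.lookup h \<alpha>; m = plcm c (lc ord b); \<mu> = m div c \<rbrakk> \<Longrightarrow>
     alg_step ord s (s\<lparr> stPh := Div S (Poly_Mapping.single 0 \<mu> * h
                                        - Poly_Mapping.single (\<alpha> - lm ord b) (m div lc ord b) * b)
                                   (lam * \<mu>) \<rparr>)"
| div_end_new: "\<lbrakk> stPh s = Div S r lam; \<forall>\<beta> \<in> Poly_Mapping.keys r. \<not> (\<exists>b \<in> stG s. mdvd (lm ord b) \<beta>);
                 \<not> inK1 r \<rbrakk> \<Longrightarrow>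
     alg_step ord s (s\<lparr> stLam := addnc lam (stLam s),
                         stG := insert r (stG s),
                         stPend := {{f, r} | f. f \<in> stG s \<and> f \<noteq> r},
                         stPh := Pairs (Some S) \<rparr>)"
| div_end_K1: "\<lbrakk> stPh s = Div S r lam; \<forall>\<beta> \<in> Poly_Mapping.keys r. \<not> (\<exists>b \<in> stG s. mdvd (lm ord b) \<beta>);
                inK1 r; degree (Poly_Mapping.lookup r 0) \<noteq> 0 \<rbrakk> \<Longrightarrow>
     alg_step ord s (s\<lparr> stLam := addnc lam (stLam s),
                         stf0 := gcd (Poly_Mapping.lookup r 0) (stf0 s),
                         stS := stS s - {S}, stPh := Loop \<rparr>)"
| div_end_K: "\<lbrakk> stPh s = Div S r lam; \<forall>\<beta> \<in> Poly_Mapping.keys r. \<not> (\<exists>b \<in> stG s. mdvd (lm ord b) \<beta>);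
               inK r \<rbrakk> \<Longrightarrow>
     alg_step ord s (s\<lparr> stLam := addnc lam (stLam s),
                         stS := stS s - {S}, stPh := Loop \<rparr>)"

end

theory Submission
  imports Defs
begin

(* The basis G only grows, and a remainder r that is added to it has no monomial divisible by a
   leading monomial of the previous basis. All polynomials that ever occur involve only the
   finitely many variables of the input, so by Dickson's lemma G can be enlarged only finitely
   often. While G stays fixed, every step decreases a lexicographic measure: pair steps remove a
   pending pair, finishing a pair phase or a pseudo-division leaves the current phase or deletes an
   element of the set of S-polynomials, picking an S-polynomial leaves the loop head, and a
   reduction step cancels the largest reducible monomial of the dividend while creating only
   smaller ones. The monomial order is well-founded on monomials in finitely many variables, again
   by Dickson's lemma, so this measure cannot decrease forever. *)

lemma nat_seq_mono_subseq:
  fixes s :: "nat \<Rightarrow> nat"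
  obtains g :: "nat \<Rightarrow> nat" where "strict_mono g" "mono (s \<circ> g)"
proof -
  obtain f where f: "strict_mono f" "monoseq (s \<circ> f)"
    using seq_monosub[of s] by (auto simp: comp_def)
  show thesis
  proof (cases "mono (s \<circ> f)")
    case True
    with f(1) show thesis by (rule that)
  next
    case False
    with f(2) have dec: "s (f n) \<le> s (f m)" if "m \<le> n" for m n
      using that by (auto simp: monoseq_def mono_def)
    obtain N where N: "\<And>n. s (f N) \<le> s (f n)"
      using ex_has_least_nat[of "\<lambda>_. True" 0 "s \<circ> f"] by auto
    have "strict_mono (\<lambda>n. f (n + N))"
      using f(1) by (simp add: strict_mono_def)
    moreover have "s (f (i + N)) = s (f N)" for i
      using dec[of N "i + N"] N[of "i + N"] by simp
    then have "mono (s \<circ> (\<lambda>n. f (n + N)))"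
      by (simp add: mono_def)
    ultimately show thesis
      by (rule that)
  qed
qed

lemma common_mono_subseq:
  fixes h :: "nat \<Rightarrow> 'a \<Rightarrow> nat"
  assumes "finite V"
  shows "\<exists>g :: nat \<Rightarrow> nat. strict_mono g \<and> (\<forall>v\<in>V. mono (\<lambda>i. h (g i) v))"
  using assms
proof (induction V rule: finite_induct)
  case empty
  show ?case by (auto intro: strict_mono_id)
next
  case (insert v V)
  then obtain g :: "nat \<Rightarrow> nat" where g: "strict_mono g" "\<forall>w\<in>V. mono (\<lambda>i. h (g i) w)"
    by blast
  obtain g' :: "nat \<Rightarrow> nat" where g': "strict_mono g'" "mono ((\<lambda>n. h (g n) v) \<circ> g')"
    by (rule nat_seq_mono_subseq[of "\<lambda>n. h (g n) v"])
  have "mono (\<lambda>i. h (g (g' i)) w)" if "w \<in> V" for w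
    using g(2) that strict_mono_mono[OF g'(1)] unfolding mono_def by blast
  moreover have "strict_mono (g \<circ> g')"
    using g(1) g'(1) by (simp add: strict_mono_def)
  ultimately show ?case
    using g'(2) by (intro exI[of _ "g \<circ> g'"]) (auto simp: comp_def)
qed

lemma dickson:
  fixes f :: "nat \<Rightarrow> 'a \<Rightarrow>\<^sub>0 nat"
  assumes "finite V" "\<And>i. Poly_Mapping.keys (f i) \<subseteq> V"
  obtains i j where "i < j" "\<And>v. Poly_Mapping.lookup (f i) v \<le> Poly_Mapping.lookup (f j) v"
proof -
  obtain g :: "nat \<Rightarrow> nat"
    where g: "strict_mono g" "\<And>v. v \<in> V \<Longrightarrow> mono (\<lambda>i. Poly_Mapping.lookup (f (g i)) v)"
    using common_mono_subseq[OF assms(1), of "\<lambda>i. Poly_Mapping.lookup (f i)"] by blast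
  have "g 0 < g 1"
    using g(1) by (simp add: strict_mono_def)
  moreover have "Poly_Mapping.lookup (f (g 0)) v \<le> Poly_Mapping.lookup (f (g 1)) v" for v
  proof (cases "v \<in> V")
    case True
    then show ?thesis using g(2) by (simp add: mono_def)
  next
    case False
    then have "v \<notin> Poly_Mapping.keys (f (g 0))"
      using assms(2) by blast
    then show ?thesis
      by (simp add: in_keys_iff)
  qed
  ultimately show thesis by (rule that)
qed

lemma lookup_single_mult_add:
  fixes p :: "'a::cancel_comm_monoid_add \<Rightarrow>\<^sub>0 'b::semiring_0"
  shows "Poly_Mapping.lookup (Poly_Mapping.single d c * p) (d + m) = c * Poly_Mapping.lookup p m"
  by (simp add: lookup_mult lookup_single when_mult mult_when Sum_any_right_distrib when_when)

lemma keys_single_mult: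
  fixes p :: "'a::monoid_add \<Rightarrow>\<^sub>0 'b::semiring_0"
  shows "Poly_Mapping.keys (Poly_Mapping.single d c * p) \<subseteq> (+) d ` Poly_Mapping.keys p"
  using keys_mult[of "Poly_Mapping.single d c" p] by (auto split: if_splits)

lemma mdvd_iff_add_diff: "mdvd a b \<longleftrightarrow> b = a + (b - a)"
  unfolding mdvd_def
  by (metis le_add1 lookup_add poly_mapping_eqI lookup_minus le_add_diff_inverse)

lemma keys_diff_subset: "Poly_Mapping.keys (a - b) \<subseteq> Poly_Mapping.keys (a :: 'a \<Rightarrow>\<^sub>0 nat)"
  by (auto simp: in_keys_iff lookup_minus)

lemma keys_mlcm: "Poly_Mapping.keys (mlcm a b) \<subseteq> Poly_Mapping.keys a \<union> Poly_Mapping.keys b"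
  unfolding mlcm_def using keys_add[of a "b - a"] by (auto simp: in_keys_iff lookup_minus)

definition mpoly_vars :: "'k::zero mpoly \<Rightarrow> nat set" where
  "mpoly_vars p = (\<Union>m\<in>Poly_Mapping.keys p. Poly_Mapping.keys m)"

lemma mpoly_vars_diff:
  fixes p q :: "'k::comm_ring_1 mpoly"
  shows "mpoly_vars (p - q) \<subseteq> mpoly_vars p \<union> mpoly_vars q"
  unfolding mpoly_vars_def using keys_diff[of p q] by blast

lemma mpoly_vars_single_mult:
  fixes p :: "'k::comm_ring_1 mpoly"
  shows "mpoly_vars (Poly_Mapping.single d c * p) \<subseteq> Poly_Mapping.keys d \<union> mpoly_vars p"
  unfolding mpoly_vars_def using keys_single_mult[of d c p] keys_add[of d] by blast

lemma dvd_plcm_left: "a dvd plcm a b"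
proof -
  have "plcm a b = a * (b div gcd a b)"
    by (simp add: plcm_def div_mult_swap)
  then show ?thesis
    by simp
qed

lemma dvd_plcm_right: "b dvd plcm a b"
  using dvd_plcm_left[of b a] by (simp add: plcm_def gcd.commute mult.commute)

definition state_inv :: "nat set \<Rightarrow> ('k::zero mpoly, 'c) state \<Rightarrow> bool" where
  "state_inv V s \<longleftrightarrow>
     finite (stG s) \<and> 0 \<notin> stG s \<and> (\<forall>g\<in>stG s. mpoly_vars g \<subseteq> V) \<and>
     finite (stS s) \<and> (\<forall>p\<in>stS s. mpoly_vars p \<subseteq> V) \<and>
     finite (stPend s) \<and> (\<forall>P\<in>stPend s. P \<subseteq> stG s) \<and>
     (\<forall>S h lam. stPh s = Div S h lam \<longrightarrow> S \<in> stS s \<and> mpoly_vars h \<subseteq> V)"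

lemma state_inv_init:
  assumes "finite F"
  shows "state_inv (\<Union>(mpoly_vars ` F)) (init F)"
proof -
  define G0 where "G0 = {p \<in> F. \<not> inK1 p}"
  have "finite G0"
    using assms unfolding G0_def by simp
  have "{{f, g} | f g. f \<in> G0 \<and> g \<in> G0 \<and> f \<noteq> g} \<subseteq> Pow G0"
    by blast
  with \<open>finite G0\<close> have "finite {{f, g} | f g. f \<in> G0 \<and> g \<in> G0 \<and> f \<noteq> g}"
    by (simp add: finite_subset)
  moreover have "0 \<notin> G0" "G0 \<subseteq> F"
    unfolding G0_def inK1_def by auto
  ultimately show ?thesis
    using \<open>finite G0\<close> unfolding state_inv_def init_def Let_def G0_def[symmetric] by auto
qed

lemma alg_step_G_mono: "alg_step ord s s' \<Longrightarrow> stG s \<subseteq> stG s'"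
  by (erule alg_step.cases) auto

lemma alg_step_new_G_irreducible:
  "alg_step ord s s' \<Longrightarrow> r \<in> stG s' - stG s \<Longrightarrow> \<beta> \<in> Poly_Mapping.keys r \<Longrightarrow> b \<in> stG s
    \<Longrightarrow> \<not> mdvd (lm ord b) \<beta>"
  by (erule alg_step.cases) auto

definition reducible_mons :: "(mon \<Rightarrow> mon \<Rightarrow> bool) \<Rightarrow> ('k::zero mpoly, 'c) state \<Rightarrow> mon set" where
  "reducible_mons ord s = (case stPh s of
     Div S h lam \<Rightarrow> {\<beta> \<in> Poly_Mapping.keys h. \<exists>b\<in>stG s. mdvd (lm ord b) \<beta>}
   | _ \<Rightarrow> {})"

definition below_some_rel :: "(mon \<Rightarrow> mon \<Rightarrow> bool) \<Rightarrow> nat set \<Rightarrow> (mon set \<times> mon set) set" where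
  "below_some_rel ord V =
     {(A', A). (\<forall>\<alpha>\<in>A. Poly_Mapping.keys \<alpha> \<subseteq> V) \<and> (\<exists>\<alpha>\<in>A. \<forall>\<beta>\<in>A'. ord \<beta> \<alpha>)}"

definition step_rel ::
  "(mon \<Rightarrow> mon \<Rightarrow> bool) \<Rightarrow> nat set \<Rightarrow> (('k::zero mpoly, 'c) state \<times> ('k mpoly, 'c) state) set" where
  "step_rel ord V = inv_image
     (less_than <*lex*> less_than <*lex*> less_than <*lex*> less_than <*lex*> below_some_rel ord V)
     (\<lambda>s. (of_bool (\<exists>oS. stPh s = Pairs oS), card (stPend s), card (stS s), of_bool (stPh s = Loop),
           reducible_mons ord s))"

context
  fixes ord :: "mon \<Rightarrow> mon \<Rightarrow> bool"
  assumes ord: "monomial_order ord"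
begin

lemma ord_add_right: "ord a b \<Longrightarrow> ord (a + c) (b + c)"
  using ord unfolding monomial_order_def by blast

lemma ord_zero_least: "a \<noteq> 0 \<Longrightarrow> ord 0 a"
  using ord unfolding monomial_order_def by blast

interpretation mon: linorder "\<lambda>a b. a = b \<or> ord a b" ord
  using ord unfolding monomial_order_def by unfold_locales blast+

lemma lm_eq_Max:
  assumes "p \<noteq> 0"
  shows "lm ord p = mon.Max (Poly_Mapping.keys p)"
  unfolding lm_def
proof (rule the_equality)
  show "mon.Max (Poly_Mapping.keys p) \<in> Poly_Mapping.keys p \<and>
      (\<forall>m\<in>Poly_Mapping.keys p. m \<noteq> mon.Max (Poly_Mapping.keys p) \<longrightarrow> ord m (mon.Max (Poly_Mapping.keys p)))"
  proof (intro conjI ballI impI)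
    show "mon.Max (Poly_Mapping.keys p) \<in> Poly_Mapping.keys p"
      using assms by (simp add: mon.Max_in)
  next
    fix m
    assume "m \<in> Poly_Mapping.keys p" "m \<noteq> mon.Max (Poly_Mapping.keys p)"
    then show "ord m (mon.Max (Poly_Mapping.keys p))"
      using mon.Max_ge[of "Poly_Mapping.keys p" m] by simp
  qed
next
  fix m
  assume "m \<in> Poly_Mapping.keys p \<and> (\<forall>m'\<in>Poly_Mapping.keys p. m' \<noteq> m \<longrightarrow> ord m' m)"
  then show "m = mon.Max (Poly_Mapping.keys p)"
    using mon.Max_in[of "Poly_Mapping.keys p"] mon.Max_ge[of "Poly_Mapping.keys p" m] assms
    by (intro mon.order_antisym) auto
qed

lemma lm_in_keys: "p \<noteq> 0 \<Longrightarrow> lm ord p \<in> Poly_Mapping.keys p"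
  by (simp add: lm_eq_Max mon.Max_in)

lemma lm_greatest:
  assumes "m \<in> Poly_Mapping.keys p" "m \<noteq> lm ord p"
  shows "ord m (lm ord p)"
proof -
  from assms(1) have "p \<noteq> 0"
    by auto
  with assms show ?thesis
    using mon.Max_ge[of "Poly_Mapping.keys p" m] by (simp add: lm_eq_Max)
qed

lemma mdvd_imp_ord:
  assumes "mdvd a b"
  shows "a = b \<or> ord a b"
proof -
  have b: "b = a + (b - a)"
    using assms unfolding mdvd_iff_add_diff .
  show ?thesis
  proof (cases "b - a = 0")
    case True
    then show ?thesis
      using b by simp
  next
    case False
    then have "ord (0 + a) (b - a + a)"
      by (intro ord_add_right ord_zero_least)
    then show ?thesis
      using b by (simp add: add.commute)
  qed
qed

(* Restricting to finitely many variables matters: in infinitely many variables a monomial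
   order may have an infinite descending chain such as x1, x2, x3, ... *)
lemma wf_ord_restrict_vars:
  assumes "finite V"
  shows "wf {(a, b). ord a b \<and> Poly_Mapping.keys a \<subseteq> V \<and> Poly_Mapping.keys b \<subseteq> V}"
proof -
  have False if chain: "\<And>i. ord (f (Suc i)) (f i)" and vars: "\<And>i. Poly_Mapping.keys (f i) \<subseteq> V"
    for f :: "nat \<Rightarrow> mon"
  proof -
    have desc: "ord (f j) (f i)" if "i < j" for i j
      using that
    proof (induction j)
      case (Suc j)
      then have "i = j \<or> ord (f j) (f i)"
        by (auto simp: less_Suc_eq)
      then show ?case
        using chain[of j] mon.less_trans[of "f (Suc j)" "f j" "f i"] by auto
    qed simp
    obtain i j where "i < j" "\<And>v. Poly_Mapping.lookup (f i) v \<le> Poly_Mapping.lookup (f j) v"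
      using dickson[of V f, OF assms vars] by blast
    then have "f i = f j \<or> ord (f i) (f j)" "ord (f j) (f i)"
      using mdvd_imp_ord[unfolded mdvd_def] desc by blast+
    then show False
      using mon.less_irrefl[of "f i"] mon.less_trans[of "f i" "f j" "f i"] by auto
  qed
  then show ?thesis
    unfolding wf_iff_no_infinite_down_chain by blast
qed

lemma keys_lm_subset_vars: "p \<noteq> 0 \<Longrightarrow> Poly_Mapping.keys (lm ord p) \<subseteq> mpoly_vars p"
  unfolding mpoly_vars_def using lm_in_keys by blast

lemma mpoly_vars_spoly:
  fixes f g :: "'k::field_gcd mpoly"
  assumes "f \<noteq> 0" "g \<noteq> 0"
  shows "mpoly_vars (spoly ord f g) \<subseteq> mpoly_vars f \<union> mpoly_vars g"
proof -
  define \<gamma> where "\<gamma> = mlcm (lm ord f) (lm ord g)"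
  have \<gamma>: "Poly_Mapping.keys \<gamma> \<subseteq> mpoly_vars f \<union> mpoly_vars g"
    using keys_mlcm keys_lm_subset_vars[OF assms(1)] keys_lm_subset_vars[OF assms(2)]
    unfolding \<gamma>_def by blast
  have "mpoly_vars (Poly_Mapping.single (\<gamma> - lm ord p) c * p) \<subseteq> mpoly_vars f \<union> mpoly_vars g"
    if "p \<in> {f, g}" for p c
    using mpoly_vars_single_mult[of "\<gamma> - lm ord p" c p] keys_diff_subset[of \<gamma> "lm ord p"] \<gamma> that
    by blast
  then show ?thesis
    unfolding spoly_def Let_def \<gamma>_def[symmetric]
    by (intro order_trans[OF mpoly_vars_diff] Un_least) simp_all
qed

lemma keys_pseudo_reduction:
  fixes h b :: "'k::field_gcd mpoly"
  assumes "b \<noteq> 0" "mdvd (lm ord b) \<alpha>"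
  defines "c \<equiv> Poly_Mapping.lookup h \<alpha>"
  defines "m \<equiv> plcm c (lc ord b)"
  assumes \<beta>: "\<beta> \<in> Poly_Mapping.keys (Poly_Mapping.single 0 (m div c) * h
                   - Poly_Mapping.single (\<alpha> - lm ord b) (m div lc ord b) * b)"
  shows "\<beta> \<in> Poly_Mapping.keys h - {\<alpha>} \<or> ord \<beta> \<alpha>"
proof -
  define d where "d = \<alpha> - lm ord b"
  define p where "p = Poly_Mapping.single 0 (m div c) * h"
  define q where "q = Poly_Mapping.single d (m div lc ord b) * b"
  have \<alpha>: "\<alpha> = d + lm ord b"
    using assms(2) unfolding mdvd_iff_add_diff d_def by (simp add: add.commute)
  have "Poly_Mapping.lookup p \<alpha> = m"
    using lookup_single_mult_add[of 0 "m div c" h \<alpha>] dvd_plcm_left[of c "lc ord b"]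
    by (simp add: p_def c_def m_def)
  moreover have "Poly_Mapping.lookup q \<alpha> = m div lc ord b * lc ord b"
    unfolding q_def \<alpha> lc_def by (rule lookup_single_mult_add)
  moreover have "m div lc ord b * lc ord b = m"
    unfolding m_def by (simp add: dvd_plcm_right)
  ultimately have "\<alpha> \<notin> Poly_Mapping.keys (p - q)"
    by (simp add: in_keys_iff lookup_minus)
  moreover have \<beta>': "\<beta> \<in> Poly_Mapping.keys (p - q)"
    using \<beta> unfolding p_def q_def d_def .
  ultimately have "\<beta> \<noteq> \<alpha>"
    by blast
  from \<beta>' have "\<beta> \<in> Poly_Mapping.keys p \<or> \<beta> \<in> Poly_Mapping.keys q"
    using keys_diff[of p q] by blast
  then show ?thesis
  proof
    assume "\<beta> \<in> Poly_Mapping.keys p"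
    then show ?thesis
      using keys_single_mult[of 0 "m div c" h] \<open>\<beta> \<noteq> \<alpha>\<close> unfolding p_def by auto
  next
    assume "\<beta> \<in> Poly_Mapping.keys q"
    then obtain x where x: "x \<in> Poly_Mapping.keys b" "\<beta> = d + x"
      using keys_single_mult[of d "m div lc ord b" b] unfolding q_def by blast
    with \<open>\<beta> \<noteq> \<alpha>\<close> \<alpha> have "ord x (lm ord b)"
      by (intro lm_greatest) auto
    then have "ord (x + d) (lm ord b + d)"
      by (rule ord_add_right)
    then show ?thesis
      using x(2) \<alpha> by (simp add: add.commute)
  qed
qed

lemma wf_below_some_rel:
  assumes "finite V"
  shows "wf (below_some_rel ord V)"
proof -
  have False if chain: "\<And>i. (A (Suc i), A i) \<in> below_some_rel ord V" for A
  proof -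
    obtain \<alpha> where \<alpha>: "\<And>i. \<alpha> i \<in> A i" "\<And>i. \<forall>\<beta>\<in>A (Suc i). ord \<beta> (\<alpha> i)"
      using chain unfolding below_some_rel_def by simp metis
    have "(\<alpha> (Suc i), \<alpha> i) \<in> {(a, b). ord a b \<and> Poly_Mapping.keys a \<subseteq> V \<and> Poly_Mapping.keys b \<subseteq> V}" for i
      using \<alpha> chain[of i] chain[of "Suc i"] unfolding below_some_rel_def by blast
    then show False
      using wf_ord_restrict_vars[OF assms] unfolding wf_iff_no_infinite_down_chain by blast
  qed
  then show ?thesis
    unfolding wf_iff_no_infinite_down_chain by blast
qed

lemma wf_step_rel: "finite V \<Longrightarrow> wf (step_rel ord V)"
  unfolding step_rel_def by (intro wf_inv_image wf_lex_prod wf_less_than wf_below_some_rel)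

lemma state_inv_step:
  fixes s s' :: "('k::field_gcd mpoly, 'k poly) state"
  assumes inv: "state_inv V s" and step: "alg_step ord s s'"
  shows "state_inv V s'"
  using step
proof cases
  case (q_spoly oS f g)
  have "f \<in> stG s" "g \<in> stG s"
    using q_spoly(3) inv unfolding state_inv_def by blast+
  then have "f \<noteq> 0" "g \<noteq> 0" "mpoly_vars f \<subseteq> V" "mpoly_vars g \<subseteq> V"
    using inv by (auto simp: state_inv_def)
  then have "mpoly_vars (spoly ord f g) \<subseteq> V"
    using mpoly_vars_spoly[of f g] by blast
  then show ?thesis
    using q_spoly(1) inv by (auto simp: state_inv_def)
next
  case (div_red S h lam \<alpha> b c m \<mu>)
  have h_vars: "mpoly_vars h \<subseteq> V" and "S \<in> stS s" and b_vars: "mpoly_vars b \<subseteq> V"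
    using inv div_red(2,5) unfolding state_inv_def by blast+
  have d_vars: "Poly_Mapping.keys (\<alpha> - lm ord b) \<subseteq> mpoly_vars h"
    using keys_diff_subset[of \<alpha> "lm ord b"] div_red(3) unfolding mpoly_vars_def by blast
  have "mpoly_vars (Poly_Mapping.single 0 \<mu> * h) \<subseteq> V"
    by (rule order_trans[OF mpoly_vars_single_mult]) (simp add: h_vars)
  moreover have "mpoly_vars (Poly_Mapping.single (\<alpha> - lm ord b) (m div lc ord b) * b) \<subseteq> V"
    by (rule order_trans[OF mpoly_vars_single_mult]) (use h_vars b_vars d_vars in blast)
  ultimately have "mpoly_vars (Poly_Mapping.single 0 \<mu> * h
      - Poly_Mapping.single (\<alpha> - lm ord b) (m div lc ord b) * b) \<subseteq> V"
    by (intro order_trans[OF mpoly_vars_diff] Un_least)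
  then show ?thesis
    using div_red(1) inv \<open>S \<in> stS s\<close> by (auto simp: state_inv_def)
next
  case (div_end_new S r lam)
  have "finite ((\<lambda>f. {f, r}) ` stG s)"
    using inv by (simp add: state_inv_def)
  then have "finite {{f, r} |f. f \<in> stG s \<and> f \<noteq> r}"
    by (rule finite_subset[rotated]) blast
  moreover have "r \<noteq> 0"
    using div_end_new(4) by (auto simp: inK1_def)
  ultimately show ?thesis
    using div_end_new(1,2) inv by (auto simp: state_inv_def)
qed (use inv in \<open>auto simp: state_inv_def\<close>)

lemma alg_step_decreases_step_rel:
  fixes s s' :: "('k::field_gcd mpoly, 'k poly) state"
  assumes inv: "state_inv V s" and step: "alg_step ord s s'" and G: "stG s' = stG s"
  shows "(s', s) \<in> step_rel ord V"
proof -
  have fin: "finite (stPend s)" "finite (stS s)"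
    and div_S: "\<And>S h lam. stPh s = Div S h lam \<Longrightarrow> S \<in> stS s"
    using inv by (simp_all add: state_inv_def)
  from step show ?thesis
  proof cases
    case (q_coprime oS f g)
    then show ?thesis
      using card_Diff1_less[OF fin(1) q_coprime(3)] by (simp add: step_rel_def)
  next
    case (q_crit oS f g h)
    then show ?thesis
      using card_Diff1_less[OF fin(1) q_crit(3)] by (simp add: step_rel_def)
  next
    case (q_spoly oS f g)
    then show ?thesis
      using card_Diff1_less[OF fin(1) q_spoly(3)] by (simp add: step_rel_def)
  next
    case (div_red S h lam \<alpha> b c m \<mu>)
    have "b \<noteq> 0"
      using inv div_red(5) unfolding state_inv_def by blast
    have "(reducible_mons ord s', reducible_mons ord s) \<in> below_some_rel ord V"
      unfolding below_some_rel_def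
    proof (intro CollectI case_prodI conjI bexI ballI)
      show "Poly_Mapping.keys \<beta> \<subseteq> V" if "\<beta> \<in> reducible_mons ord s" for \<beta>
        using that div_red(2) inv unfolding reducible_mons_def state_inv_def mpoly_vars_def by auto
      show "\<alpha> \<in> reducible_mons ord s"
        using div_red(2,3,5,6) unfolding reducible_mons_def by auto
      show "ord \<beta> \<alpha>" if "\<beta> \<in> reducible_mons ord s'" for \<beta>
        using that div_red keys_pseudo_reduction[OF \<open>b \<noteq> 0\<close> div_red(6), where h = h and \<beta> = \<beta>]
        unfolding reducible_mons_def by auto
    qed
    then show ?thesis
      using div_red(1,2) by (simp add: step_rel_def)
  next
    case (div_end_new S r lam)
    have "r \<noteq> 0"
      using div_end_new(4) by (auto simp: inK1_def)
    then have "mdvd (lm ord r) (lm ord r)" "lm ord r \<in> Poly_Mapping.keys r" "r \<in> stG s"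
      using div_end_new(1) G lm_in_keys by (auto simp: mdvd_def)
    then show ?thesis
      using div_end_new(3) by blast
  next
    case (div_end_K1 S r lam)
    then show ?thesis
      using card_Diff1_less[OF fin(2) div_S[OF div_end_K1(2)]] by (simp add: step_rel_def)
  next
    case (div_end_K S r lam)
    then show ?thesis
      using card_Diff1_less[OF fin(2) div_S[OF div_end_K(2)]] by (simp add: step_rel_def)
  qed (simp_all add: step_rel_def)
qed

lemma state_inv_run:
  fixes run :: "nat \<Rightarrow> ('k::field_gcd mpoly, 'k poly) state"
  assumes "finite F" and "run 0 = init F" and "\<And>i. alg_step ord (run i) (run (Suc i))"
  shows "state_inv (\<Union>(mpoly_vars ` F)) (run i)"
proof (induction i)
  case 0
  show ?case
    using state_inv_init[OF assms(1)] assms(2) by simp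
next
  case (Suc i)
  then show ?case
    using state_inv_step[OF _ assms(3)] by blast
qed

lemma finite_G_extensions:
  fixes run :: "nat \<Rightarrow> ('k::field_gcd mpoly, 'k poly) state"
  assumes "finite V"
    and run: "\<And>i. alg_step ord (run i) (run (Suc i))"
    and inv: "\<And>i. state_inv V (run i)"
  shows "finite {i. stG (run (Suc i)) \<noteq> stG (run i)}"
proof (rule ccontr)
  assume X: "infinite {i. stG (run (Suc i)) \<noteq> stG (run i)}" (is "infinite ?X")
  define t where "t = enumerate ?X"
  have "strict_mono t"
    unfolding t_def using strict_mono_enumerate[OF X] .
  have G_mono: "stG (run i) \<subseteq> stG (run j)" if "i \<le> j" for i j
    using lift_Suc_mono_le[of "\<lambda>i. stG (run i)"] alg_step_G_mono[OF run] that by blast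
  have "\<exists>r. r \<in> stG (run (Suc (t k))) - stG (run (t k))" for k
    using enumerate_in_set[OF X, of k] G_mono[of "t k" "Suc (t k)"] unfolding t_def by auto
  then obtain r where r: "\<And>k. r k \<in> stG (run (Suc (t k))) - stG (run (t k))"
    by metis
  have "r k \<noteq> 0" "mpoly_vars (r k) \<subseteq> V" for k
    using inv[of "Suc (t k)"] r[of k] unfolding state_inv_def by auto
  then have "Poly_Mapping.keys (lm ord (r k)) \<subseteq> V" "lm ord (r k) \<in> Poly_Mapping.keys (r k)" for k
    using keys_lm_subset_vars lm_in_keys by blast+
  then obtain i j where "i < j" "mdvd (lm ord (r i)) (lm ord (r j))"
    using dickson[OF assms(1), of "\<lambda>k. lm ord (r k)"] unfolding mdvd_def by blast
  moreover have "r i \<in> stG (run (t j))"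
    using r[of i] G_mono[of "Suc (t i)" "t j"] \<open>strict_mono t\<close> \<open>i < j\<close>
    by (auto simp: strict_mono_def Suc_le_eq)
  ultimately show False
    using alg_step_new_G_irreducible[OF run r[of j]] \<open>lm ord (r j) \<in> Poly_Mapping.keys (r j)\<close>
    by blast
qed

end

theorem lemma3p8:
  fixes ord :: "mon \<Rightarrow> mon \<Rightarrow> bool"
    and F :: "'k::field_gcd mpoly set"
  assumes "monomial_order ord"
    and "finite F"
    and "\<forall>p \<in> F. \<not> inK p"
  shows "\<not> (\<exists>run :: nat \<Rightarrow> ('k mpoly, 'k poly) state.
              run 0 = init F \<and> (\<forall>i. alg_step ord (run i) (run (Suc i))))"
proof
  assume "\<exists>run :: nat \<Rightarrow> ('k mpoly, 'k poly) state.
              run 0 = init F \<and> (\<forall>i. alg_step ord (run i) (run (Suc i)))"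
  then obtain run :: "nat \<Rightarrow> ('k mpoly, 'k poly) state"
    where run0: "run 0 = init F" and run: "\<And>i. alg_step ord (run i) (run (Suc i))"
    by blast
  define V where "V = \<Union>(mpoly_vars ` F)"
  have "finite V"
    using assms(2) by (simp add: V_def mpoly_vars_def)
  have inv: "state_inv V (run i)" for i
    unfolding V_def using state_inv_run[OF assms(1,2) run0 run] .
  obtain N where "\<forall>i \<in> {i. stG (run (Suc i)) \<noteq> stG (run i)}. i < N"
    using finite_G_extensions[where run = run, OF assms(1) \<open>finite V\<close> run inv]
    by (auto simp: finite_nat_set_iff_bounded)
  then have G_stable: "stG (run (Suc (i + N))) = stG (run (i + N))" for i
    by fastforce
  define tail where "tail i = run (i + N)" for i
  have "(tail (Suc i), tail i) \<in> step_rel ord V" for i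
    unfolding tail_def using alg_step_decreases_step_rel[OF assms(1) inv run G_stable] by simp
  then show False
    using wf_step_rel[OF assms(1) \<open>finite V\<close>] unfolding wf_iff_no_infinite_down_chain by blast
qed

end
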